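(* Let $G$ be a map graph with a corresponding planar bipartite graph $B$, let $\mathcal{D}=(T,\beta_{\mathcal{D}})$ be a nice tree decomposition of $B$, and let $\mathcal{D}'$ be derived from $\mathcal{D}$ as described in the context. Let $t$ be a node of $T$ labelled join in $\mathcal{D}$, with children $t_1$ and $t_2$. Then $\mathsf{Original}(t)=\mathsf{Original}(t_1)=\mathsf{Original}(t_2)$, $\mathsf{Cliques}(t)=\mathsf{Cliques}(t_1)=\mathsf{Cliques}(t_2)$, $\mathsf{Fake}(t_1)\cap\mathsf{Fake}(t_2)=\emptyset$, and $\mathsf{Fake}(t)=\mathsf{Fake}(t_1)\cup\mathsf{Fake}(t_2)$.
   Context: All graphs are finite and simple. For a bipartite graph $B$ with bipartition $V(B)=W\uplus U$, the half-square of $B$ is the graph on $W$ in which two vertices are adjacent iff they are at distance exactly $2$ in $B$. A graph $G$ is a map graph iff it is the half-square of some planar bipartite graph $B$; such $B$ (with $W=V(G)$) is a corresponding planar bipartite graph, and $S(G)=U$ is the set of special vertices; for $s\in S(G)$, $N_B(s)$ is a clique of $G$ called a special clique. A tree decomposition $(T,\beta)$: rooted tree $T$, bags covering all vertices and edges, and for each vertex the nodes containing it induce a connected subtree. $\gamma_{\mathcal{D}}(t)$ is the union of bags of $t$ and its descendants. A nice tree decomposition has empty root bag and each node is a leaf (empty bag), introduce$(w)$, forget$(w)$ (one child, bag obtained by adding/removing $w$), or join (two children whose bags equal $\beta(t)$). The derived decomposition $\mathcal{D}'=(T,\beta_{\mathcal{D}'})$ has $\beta_{\mathcal{D}'}(t)=(\beta_{\mathcal{D}}(t)\cap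 V(G))\cup\bigcup_{s\in\beta_{\mathcal{D}}(t)\cap S(G)}(N_B(s)\cap\gamma_{\mathcal{D}}(t))$. Define $\mathsf{Original}(t)=\beta_{\mathcal{D}}(t)\cap\beta_{\mathcal{D}'}(t)$, $\mathsf{Fake}(t)=\beta_{\mathcal{D}'}(t)\setminus\beta_{\mathcal{D}}(t)$, and $\mathsf{Cliques}(t)=\{N_B(s): s\in S(G)\cap\beta_{\mathcal{D}}(t)\}$. *)

theory Defs
  imports "HOL-Analysis.Analysis"
begin

definition simple_graph :: "'v set \<Rightarrow> ('v \<Rightarrow> 'v \<Rightarrow> bool) \<Rightarrow> bool" where
  "simple_graph V E \<longleftrightarrow> finite V \<and> (\<forall>x y. E x y \<longrightarrow> x \<in> V \<and> y \<in> V)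
     \<and> (\<forall>x y. E x y \<longrightarrow> E y x) \<and> (\<forall>x. \<not> E x x)"

definition edges :: "('v \<Rightarrow> 'v \<Rightarrow> bool) \<Rightarrow> 'v set set" where
  "edges E = {{u, v} | u v. E u v}"

definition bipartite_graph :: "'v set \<Rightarrow> 'v set \<Rightarrow> ('v \<Rightarrow> 'v \<Rightarrow> bool) \<Rightarrow> bool" where
  "bipartite_graph W U E \<longleftrightarrow> W \<inter> U = {} \<and> simple_graph (W \<union> U) E
     \<and> (\<forall>x y. E x y \<longrightarrow> (x \<in> W \<and> y \<in> U) \<or> (x \<in> U \<and> y \<in> W))"

definition planar_graph :: "'v set \<Rightarrow> ('v \<Rightarrow> 'v \<Rightarrow> bool) \<Rightarrow> bool" where
  "planar_graph V E \<longleftrightarrow> simple_graph V E \<and>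
     (\<exists>(p :: 'v \<Rightarrow> complex) (a :: 'v set \<Rightarrow> real \<Rightarrow> complex).
        inj_on p V \<and>
        (\<forall>u v. E u v \<longrightarrow> arc (a {u, v}) \<and>
              {pathstart (a {u, v}), pathfinish (a {u, v})} = {p u, p v} \<and>
              path_image (a {u, v}) \<inter> p ` V \<subseteq> {p u, p v}) \<and>
        (\<forall>e \<in> edges E. \<forall>e' \<in> edges E. e \<noteq> e' \<longrightarrow>
              path_image (a e) \<inter> path_image (a e') \<subseteq> p ` (e \<inter> e')))"

definition half_square :: "'v set \<Rightarrow> ('v \<Rightarrow> 'v \<Rightarrow> bool) \<Rightarrow> 'v \<Rightarrow> 'v \<Rightarrow> bool" where
  "half_square W E u v \<longleftrightarrow> u \<in> W \<and> v \<in> W \<and> u \<noteq> v \<and> \<not> E u v \<and> (\<exists>s. E u s \<and> E s v)"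

text \<open>G = (VG, EG) is a map graph with corresponding planar bipartite graph B = (W \<union> U, E),
  W = V(G), U = S(G).\<close>
definition map_graph_with :: "'v set \<Rightarrow> ('v \<Rightarrow> 'v \<Rightarrow> bool) \<Rightarrow> 'v set \<Rightarrow> 'v set
    \<Rightarrow> ('v \<Rightarrow> 'v \<Rightarrow> bool) \<Rightarrow> bool" where
  "map_graph_with VG EG W U E \<longleftrightarrow> VG = W \<and> bipartite_graph W U E \<and>
     planar_graph (W \<union> U) E \<and> EG = half_square W E"

definition nbr :: "('v \<Rightarrow> 'v \<Rightarrow> bool) \<Rightarrow> 'v \<Rightarrow> 'v set" where
  "nbr E s = {x. E s x}"

definition rooted_tree :: "'n set \<Rightarrow> ('n \<times> 'n) set \<Rightarrow> 'n \<Rightarrow> bool" where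
  "rooted_tree N C r \<longleftrightarrow> finite N \<and> C \<subseteq> N \<times> N \<and> r \<in> N \<and> (\<forall>x. (x, r) \<notin> C)
     \<and> (\<forall>y \<in> N - {r}. \<exists>!x. (x, y) \<in> C) \<and> (\<forall>y \<in> N. (r, y) \<in> C\<^sup>*)"

definition children :: "('n \<times> 'n) set \<Rightarrow> 'n \<Rightarrow> 'n set" where
  "children C t = {c. (t, c) \<in> C}"

definition descendants :: "('n \<times> 'n) set \<Rightarrow> 'n \<Rightarrow> 'n set" where
  "descendants C t = {d. (t, d) \<in> C\<^sup>*}"

definition gamma :: "('n \<times> 'n) set \<Rightarrow> ('n \<Rightarrow> 'v set) \<Rightarrow> 'n \<Rightarrow> 'v set" where
  "gamma C \<beta> t = \<Union> (\<beta> ` descendants C t)"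

definition tree_connected :: "('n \<times> 'n) set \<Rightarrow> 'n set \<Rightarrow> bool" where
  "tree_connected C X \<longleftrightarrow> (\<forall>x \<in> X. \<forall>y \<in> X.
     (x, y) \<in> {(a, b). a \<in> X \<and> b \<in> X \<and> ((a, b) \<in> C \<or> (b, a) \<in> C)}\<^sup>*)"

definition tree_decomposition :: "'v set \<Rightarrow> ('v \<Rightarrow> 'v \<Rightarrow> bool) \<Rightarrow> 'n set
    \<Rightarrow> ('n \<times> 'n) set \<Rightarrow> 'n \<Rightarrow> ('n \<Rightarrow> 'v set) \<Rightarrow> bool" where
  "tree_decomposition V E N C r \<beta> \<longleftrightarrow> rooted_tree N C r
     \<and> (\<forall>t \<in> N. \<beta> t \<subseteq> V)
     \<and> (\<forall>v \<in> V. \<exists>t \<in> N. v \<in> \<beta> t)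
     \<and> (\<forall>u v. E u v \<longrightarrow> (\<exists>t \<in> N. u \<in> \<beta> t \<and> v \<in> \<beta> t))
     \<and> (\<forall>v \<in> V. tree_connected C {t \<in> N. v \<in> \<beta> t})"

definition is_leaf_node :: "('n \<times> 'n) set \<Rightarrow> ('n \<Rightarrow> 'v set) \<Rightarrow> 'n \<Rightarrow> bool" where
  "is_leaf_node C \<beta> t \<longleftrightarrow> children C t = {} \<and> \<beta> t = {}"

definition is_introduce_node :: "('n \<times> 'n) set \<Rightarrow> ('n \<Rightarrow> 'v set) \<Rightarrow> 'n \<Rightarrow> 'v \<Rightarrow> bool" where
  "is_introduce_node C \<beta> t w \<longleftrightarrow> (\<exists>c. children C t = {c} \<and> w \<notin> \<beta> c \<and> \<beta> t = insert w (\<beta> c))"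

definition is_forget_node :: "('n \<times> 'n) set \<Rightarrow> ('n \<Rightarrow> 'v set) \<Rightarrow> 'n \<Rightarrow> 'v \<Rightarrow> bool" where
  "is_forget_node C \<beta> t w \<longleftrightarrow> (\<exists>c. children C t = {c} \<and> w \<in> \<beta> c \<and> \<beta> t = \<beta> c - {w})"

definition is_join_node :: "('n \<times> 'n) set \<Rightarrow> ('n \<Rightarrow> 'v set) \<Rightarrow> 'n \<Rightarrow> 'n \<Rightarrow> 'n \<Rightarrow> bool" where
  "is_join_node C \<beta> t t1 t2 \<longleftrightarrow> t1 \<noteq> t2 \<and> children C t = {t1, t2} \<and> \<beta> t1 = \<beta> t \<and> \<beta> t2 = \<beta> t"

definition nice_tree_decomposition :: "'v set \<Rightarrow> ('v \<Rightarrow> 'v \<Rightarrow> bool) \<Rightarrow> 'n set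
    \<Rightarrow> ('n \<times> 'n) set \<Rightarrow> 'n \<Rightarrow> ('n \<Rightarrow> 'v set) \<Rightarrow> bool" where
  "nice_tree_decomposition V E N C r \<beta> \<longleftrightarrow> tree_decomposition V E N C r \<beta> \<and> \<beta> r = {} \<and>
     (\<forall>t \<in> N. is_leaf_node C \<beta> t \<or> (\<exists>w. is_introduce_node C \<beta> t w)
        \<or> (\<exists>w. is_forget_node C \<beta> t w) \<or> (\<exists>t1 t2. is_join_node C \<beta> t t1 t2))"

definition derived_bag :: "'v set \<Rightarrow> 'v set \<Rightarrow> ('v \<Rightarrow> 'v \<Rightarrow> bool) \<Rightarrow> ('n \<times> 'n) set
    \<Rightarrow> ('n \<Rightarrow> 'v set) \<Rightarrow> 'n \<Rightarrow> 'v set" where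
  "derived_bag W U E C \<beta> t = (\<beta> t \<inter> W) \<union> (\<Union>s \<in> \<beta> t \<inter> U. nbr E s \<inter> gamma C \<beta> t)"

definition Original :: "'v set \<Rightarrow> 'v set \<Rightarrow> ('v \<Rightarrow> 'v \<Rightarrow> bool) \<Rightarrow> ('n \<times> 'n) set
    \<Rightarrow> ('n \<Rightarrow> 'v set) \<Rightarrow> 'n \<Rightarrow> 'v set" where
  "Original W U E C \<beta> t = \<beta> t \<inter> derived_bag W U E C \<beta> t"

definition Fake :: "'v set \<Rightarrow> 'v set \<Rightarrow> ('v \<Rightarrow> 'v \<Rightarrow> bool) \<Rightarrow> ('n \<times> 'n) set
    \<Rightarrow> ('n \<Rightarrow> 'v set) \<Rightarrow> 'n \<Rightarrow> 'v set" where
  "Fake W U E C \<beta> t = derived_bag W U E C \<beta> t - \<beta> t"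

definition Cliques :: "'v set \<Rightarrow> ('v \<Rightarrow> 'v \<Rightarrow> bool) \<Rightarrow> ('n \<Rightarrow> 'v set) \<Rightarrow> 'n \<Rightarrow> 'v set set" where
  "Cliques U E \<beta> t = {nbr E s | s. s \<in> U \<and> s \<in> \<beta> t}"

end

theory Submission
  imports Defs
begin

text \<open>At a join node all three bags coincide, so the original vertices and the special cliques,
  which depend on the bag alone, agree. The fake vertices are neighbours of special vertices in the
  bag found strictly below the node; since the subtrees of the two children meet only in the common
  bag (the separation property of tree decompositions), the fake vertices split disjointly.\<close>

lemma rooted_tree_parent_unique:
  assumes "rooted_tree N C r" "(x, y) \<in> C" "(z, y) \<in> C"
  shows "x = z"
proof -
  have "y \<in> N - {r}" using assms unfolding rooted_tree_def by auto
  then show ?thesis using assms unfolding rooted_tree_def by blast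
qed

lemma rooted_tree_irrefl_trancl:
  assumes "rooted_tree N C r"
  shows "(y, y) \<notin> C\<^sup>+"
proof
  assume cycle: "(y, y) \<in> C\<^sup>+"
  then obtain w where "(w, y) \<in> C" by (meson tranclE)
  then have "(r, y) \<in> C\<^sup>*" using assms unfolding rooted_tree_def by auto
  then show False using cycle
  proof (induction rule: rtrancl_induct)
    case base
    then obtain w where "(w, r) \<in> C" by (meson tranclE)
    then show ?case using assms unfolding rooted_tree_def by auto
  next
    case (step y z)
    obtain w where w: "(z, w) \<in> C\<^sup>*" "(w, z) \<in> C" using step.prems by (meson tranclD2)
    have "w = y" using rooted_tree_parent_unique[OF assms w(2) step.hyps(2)] .
    then have "(y, y) \<in> C\<^sup>+" using w step.hyps(2) by (meson rtrancl_into_trancl2)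
    then show ?case using step.IH by blast
  qed
qed

lemma rooted_tree_ancestors_comparable:
  assumes "rooted_tree N C r" "(a, d) \<in> C\<^sup>*" "(b, d) \<in> C\<^sup>*"
  shows "(a, b) \<in> C\<^sup>* \<or> (b, a) \<in> C\<^sup>*"
  using assms(2,3)
proof (induction rule: rtrancl_induct)
  case base
  then show ?case by blast
next
  case (step y z)
  show ?case
  proof (cases "b = z")
    case True
    then show ?thesis using step by (meson rtrancl.rtrancl_into_rtrancl)
  next
    case False
    then obtain w where w: "(b, w) \<in> C\<^sup>*" "(w, z) \<in> C" using step.prems by (metis rtranclE)
    have "w = y" using rooted_tree_parent_unique[OF assms(1) w(2) step.hyps(2)] .
    then show ?thesis using step.IH w by blast
  qed
qed

lemma rooted_tree_descendants_children_disjoint: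
  assumes rt: "rooted_tree N C r" and "(t, c1) \<in> C" "(t, c2) \<in> C" "c1 \<noteq> c2"
  shows "descendants C c1 \<inter> descendants C c2 = {}"
proof -
  have not_below: "(a, b) \<notin> C\<^sup>*" if "(t, a) \<in> C" "(t, b) \<in> C" "a \<noteq> b" for a b
  proof
    assume "(a, b) \<in> C\<^sup>*"
    then obtain w where "(a, w) \<in> C\<^sup>*" "(w, b) \<in> C" using \<open>a \<noteq> b\<close> by (metis rtranclE)
    moreover have "w = t" using rooted_tree_parent_unique[OF rt \<open>(w, b) \<in> C\<close> \<open>(t, b) \<in> C\<close>] .
    ultimately have "(t, t) \<in> C\<^sup>+" using \<open>(t, a) \<in> C\<close> by (meson rtrancl_into_trancl2)
    then show False using rooted_tree_irrefl_trancl[OF rt] by blast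
  qed
  show ?thesis
  proof (rule ccontr)
    assume "descendants C c1 \<inter> descendants C c2 \<noteq> {}"
    then obtain d where "(c1, d) \<in> C\<^sup>*" "(c2, d) \<in> C\<^sup>*" unfolding descendants_def by auto
    then show False
      using rooted_tree_ancestors_comparable[OF rt] not_below assms(2-4) by metis
  qed
qed

lemma rooted_tree_walk_stays_below_child:
  assumes rt: "rooted_tree N C r" and tc: "(t, c) \<in> C" and "t \<notin> X"
    and walk: "(x, y) \<in> {(a, b). a \<in> X \<and> b \<in> X \<and> ((a, b) \<in> C \<or> (b, a) \<in> C)}\<^sup>*"
    and "(c, x) \<in> C\<^sup>*"
  shows "(c, y) \<in> C\<^sup>*"
  using walk
proof (induction rule: rtrancl_induct)
  case base
  then show ?case using \<open>(c, x) \<in> C\<^sup>*\<close> .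
next
  case (step y z)
  then have "z \<in> X" and edge: "(y, z) \<in> C \<or> (z, y) \<in> C" by auto
  show ?case
    using edge
  proof
    assume "(y, z) \<in> C"
    then show ?thesis using step.IH by simp
  next
    assume zy: "(z, y) \<in> C"
    show ?thesis
    proof (cases "y = c")
      case True
      then have "z = t" using rooted_tree_parent_unique[OF rt _ tc] zy by blast
      then show ?thesis using \<open>z \<in> X\<close> \<open>t \<notin> X\<close> by simp
    next
      case False
      then obtain w where "(c, w) \<in> C\<^sup>*" "(w, y) \<in> C" using step.IH by (metis rtranclE)
      then show ?thesis using rooted_tree_parent_unique[OF rt _ zy] by blast
    qed
  qed
qed

lemma rooted_tree_descendant_in_nodes:
  assumes "rooted_tree N C r" "(a, d) \<in> C\<^sup>*" "a \<in> N"
  shows "d \<in> N"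
  using assms(2,3)
  by (induction rule: rtrancl_induct) (use assms(1) in \<open>auto simp: rooted_tree_def\<close>)

lemma descendants_unfold:
  "descendants C t = insert t (\<Union>c \<in> children C t. descendants C c)"
proof (intro equalityI subsetI)
  fix d assume "d \<in> descendants C t"
  then have "(t, d) \<in> C\<^sup>*" unfolding descendants_def by simp
  then show "d \<in> insert t (\<Union>c \<in> children C t. descendants C c)"
    by (cases rule: converse_rtranclE) (auto simp: children_def descendants_def)
next
  fix d assume "d \<in> insert t (\<Union>c \<in> children C t. descendants C c)"
  then show "d \<in> descendants C t"
    unfolding children_def descendants_def by (auto intro: converse_rtrancl_into_rtrancl)
qed

lemma gamma_unfold:
  "gamma C \<beta> t = \<beta> t \<union> (\<Union>c \<in> children C t. gamma C \<beta> c)"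
  unfolding gamma_def by (subst descendants_unfold) auto

lemma tree_decomposition_gamma_children_inter:
  assumes td: "tree_decomposition V E N C r \<beta>"
    and c1: "(t, c1) \<in> C" and c2: "(t, c2) \<in> C" and "c1 \<noteq> c2"
  shows "gamma C \<beta> c1 \<inter> gamma C \<beta> c2 \<subseteq> \<beta> t"
proof
  fix v assume v: "v \<in> gamma C \<beta> c1 \<inter> gamma C \<beta> c2"
  have rt: "rooted_tree N C r" using td unfolding tree_decomposition_def by blast
  obtain d1 where d1: "(c1, d1) \<in> C\<^sup>*" "v \<in> \<beta> d1"
    using v unfolding gamma_def descendants_def by auto
  obtain d2 where d2: "(c2, d2) \<in> C\<^sup>*" "v \<in> \<beta> d2"
    using v unfolding gamma_def descendants_def by auto
  have "c1 \<in> N" "c2 \<in> N" using rt c1 c2 unfolding rooted_tree_def by auto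
  then have "d1 \<in> N" "d2 \<in> N" using rooted_tree_descendant_in_nodes[OF rt] d1 d2 by auto
  define X where "X = {x \<in> N. v \<in> \<beta> x}"
  have "v \<in> V" using td \<open>d1 \<in> N\<close> d1(2) unfolding tree_decomposition_def by blast
  then have "tree_connected C X" using td unfolding tree_decomposition_def X_def by blast
  then have walk: "(d1, d2) \<in> {(a, b). a \<in> X \<and> b \<in> X \<and> ((a, b) \<in> C \<or> (b, a) \<in> C)}\<^sup>*"
    using \<open>d1 \<in> N\<close> \<open>d2 \<in> N\<close> d1 d2 unfolding tree_connected_def X_def by blast
  show "v \<in> \<beta> t"
  proof (rule ccontr)
    assume "v \<notin> \<beta> t"
    then have "t \<notin> X" unfolding X_def by simp
    then have "d2 \<in> descendants C c1"
      using rooted_tree_walk_stays_below_child[OF rt c1 _ walk d1(1)] unfolding descendants_def by simp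
    moreover have "d2 \<in> descendants C c2" using d2(1) unfolding descendants_def by simp
    ultimately show False
      using rooted_tree_descendants_children_disjoint[OF rt c1 c2 \<open>c1 \<noteq> c2\<close>] by blast
  qed
qed

lemma Original_eq:
  "Original W U E C \<beta> t = \<beta> t \<inter> (W \<union> (\<Union>s \<in> \<beta> t \<inter> U. nbr E s))"
proof -
  have "\<beta> t \<subseteq> gamma C \<beta> t" by (subst gamma_unfold) blast
  then show ?thesis unfolding Original_def derived_bag_def by blast
qed

lemma Fake_eq:
  "Fake W U E C \<beta> t = (\<Union>s \<in> \<beta> t \<inter> U. nbr E s \<inter> gamma C \<beta> t) - \<beta> t"
  unfolding Fake_def derived_bag_def by blast

theorem lemma13:
  fixes VG W U :: "'v set" and EG E :: "'v \<Rightarrow> 'v \<Rightarrow> bool"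
    and N :: "'n set" and C :: "('n \<times> 'n) set" and r t t1 t2 :: 'n and \<beta> :: "'n \<Rightarrow> 'v set"
  assumes "map_graph_with VG EG W U E"
    and "nice_tree_decomposition (W \<union> U) E N C r \<beta>"
    and "t \<in> N"
    and "is_join_node C \<beta> t t1 t2"
  shows "Original W U E C \<beta> t = Original W U E C \<beta> t1
       \<and> Original W U E C \<beta> t1 = Original W U E C \<beta> t2
       \<and> Cliques U E \<beta> t = Cliques U E \<beta> t1
       \<and> Cliques U E \<beta> t1 = Cliques U E \<beta> t2
       \<and> Fake W U E C \<beta> t1 \<inter> Fake W U E C \<beta> t2 = {}
       \<and> Fake W U E C \<beta> t = Fake W U E C \<beta> t1 \<union> Fake W U E C \<beta> t2"
proof -
  have td: "tree_decomposition (W \<union> U) E N C r \<beta>"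
    using assms(2) unfolding nice_tree_decomposition_def by blast
  have join: "t1 \<noteq> t2" "children C t = {t1, t2}" "\<beta> t1 = \<beta> t" "\<beta> t2 = \<beta> t"
    using assms(4) unfolding is_join_node_def by auto
  then have "(t, t1) \<in> C" "(t, t2) \<in> C" unfolding children_def by auto
  then have separated: "gamma C \<beta> t1 \<inter> gamma C \<beta> t2 \<subseteq> \<beta> t"
    using tree_decomposition_gamma_children_inter[OF td] join(1) by blast
  have gamma_t: "gamma C \<beta> t = \<beta> t \<union> gamma C \<beta> t1 \<union> gamma C \<beta> t2"
    using gamma_unfold[of C \<beta> t] join(2) by auto
  show ?thesis
    unfolding Original_eq Fake_eq Cliques_def join(3,4)
    using separated gamma_t by blast
qed

end
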